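(* Consider the problem $1|p\text{-}batch,v_i,incompatible|\sum w_iC_i$ defined as follows. Let $N=\{1,\ldots,n\}$ be a set of jobs partitioned into families $N_1,\ldots,N_m$ (pairwise disjoint, union $N$). Each job $i$ has a weight $w_i\ge 0$, a size $v_i$ with $0\le v_i\le V$, and processing time $p_i=q_j>0$ for all $i\in N_j$. A single machine of capacity $V$ processes batches: a batch is a set of jobs from a single family whose total size is at most $V$; a batch of family $j$ occupies the machine for $q_j$ time units without interruption, the machine processes at most one batch at a time, every job belongs to exactly one batch, and each job's completion time $C_i$ equals the completion time of its batch. The objective is to minimize $\sum_{i\in N} w_iC_i$. For each family $j$, order the jobs of $N_j$ in non-increasing order of size and load them greedily in that order until the remaining capacity is insufficient for the next job; let $N_j^b$ be the number of jobs so loaded, and let $B_j=\lceil |N_j|/N_j^b\rceil$. Then there exists an optimal solution in which, for every family $j$, the number of batches containing jobs of family $j$ is at most $B_j$.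
   Context: Any $N_j^b$ jobs of $N_j$ together have total size at most $V$ (since the $N_j^b$ largest jobs of $N_j$ fit). The weights $w_i$ are assumed nonnegative (in the paper they are drawn from positive integers). *)

theory Defs
  imports Main "HOL.Real"
begin

text \<open>Jobs are 1..n; f i is the family of job i; q j the processing time of family j;
  v i the size and w i the weight of job i; V the machine capacity.
  A schedule is a list of batches, each given as (set of jobs, start time).\<close>

definition fam_jobs :: "nat \<Rightarrow> (nat \<Rightarrow> nat) \<Rightarrow> nat \<Rightarrow> nat set" where
  "fam_jobs n f j = {i \<in> {1..n}. f i = j}"

definition feasible ::
  "nat \<Rightarrow> (nat \<Rightarrow> nat) \<Rightarrow> (nat \<Rightarrow> real) \<Rightarrow> (nat \<Rightarrow> real) \<Rightarrow> real \<Rightarrow> (nat set \<times> real) list \<Rightarrow> bool" where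
  "feasible n f q v V S \<longleftrightarrow>
     (\<forall>k<length S. fst (S!k) \<noteq> {} \<and> fst (S!k) \<subseteq> {1..n}
        \<and> (\<forall>i\<in>fst (S!k). \<forall>i'\<in>fst (S!k). f i = f i')
        \<and> (\<Sum>i\<in>fst (S!k). v i) \<le> V
        \<and> 0 \<le> snd (S!k))
   \<and> (\<Union>k<length S. fst (S!k)) = {1..n}
   \<and> (\<forall>k<length S. \<forall>l<length S. k \<noteq> l \<longrightarrow>
        fst (S!k) \<inter> fst (S!l) = {}
        \<and> (\<forall>i\<in>fst (S!k). \<forall>i'\<in>fst (S!l).
              snd (S!k) + q (f i) \<le> snd (S!l) \<or> snd (S!l) + q (f i') \<le> snd (S!k)))"

definition cost ::
  "(nat \<Rightarrow> real) \<Rightarrow> (nat \<Rightarrow> nat) \<Rightarrow> (nat \<Rightarrow> real) \<Rightarrow> (nat set \<times> real) list \<Rightarrow> real" where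
  "cost w f q S = (\<Sum>k<length S. \<Sum>i\<in>fst (S!k). w i * (snd (S!k) + q (f i)))"

definition optimal ::
  "nat \<Rightarrow> (nat \<Rightarrow> nat) \<Rightarrow> (nat \<Rightarrow> real) \<Rightarrow> (nat \<Rightarrow> real) \<Rightarrow> (nat \<Rightarrow> real) \<Rightarrow> real \<Rightarrow> (nat set \<times> real) list \<Rightarrow> bool" where
  "optimal n f q v w V S \<longleftrightarrow> feasible n f q v V S \<and>
     (\<forall>S'. feasible n f q v V S' \<longrightarrow> cost w f q S \<le> cost w f q S')"

definition num_batches :: "(nat \<Rightarrow> nat) \<Rightarrow> (nat set \<times> real) list \<Rightarrow> nat \<Rightarrow> nat" where
  "num_batches f S j = card {k. k < length S \<and> (\<exists>i\<in>fst (S!k). f i = j)}"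

fun greedy_count :: "real \<Rightarrow> real list \<Rightarrow> nat" where
  "greedy_count cap [] = 0"
| "greedy_count cap (x # xs) = (if x \<le> cap then Suc (greedy_count (cap - x) xs) else 0)"

definition Nb :: "nat \<Rightarrow> (nat \<Rightarrow> nat) \<Rightarrow> (nat \<Rightarrow> real) \<Rightarrow> real \<Rightarrow> nat \<Rightarrow> nat" where
  "Nb n f v V j = greedy_count V (rev (sort (map v (sorted_list_of_set (fam_jobs n f j)))))"

definition Bj :: "nat \<Rightarrow> (nat \<Rightarrow> nat) \<Rightarrow> (nat \<Rightarrow> real) \<Rightarrow> real \<Rightarrow> nat \<Rightarrow> int" where
  "Bj n f v V j = \<lceil>real (card (fam_jobs n f j)) / real (Nb n f v V j)\<rceil>"

end

theory Submission
  imports Defs "HOL-Library.Multiset"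
begin

(* Running the batches in
   order of start time without idle time never increases the weighted cost and yields start
   times from a finite set, so an optimal schedule exists; among the optimal ones take one that
   also minimises the unweighted sum of completion times. If it used more than B_j batches of
   family j, then, since any N_j^b jobs of N_j fit into one batch, some batch of family j other
   than the last one, b, holds fewer than N_j^b jobs. Moving a job of b into that earlier batch
   keeps the schedule feasible, does not increase the weighted cost and strictly decreases the
   unweighted one: a contradiction. *)

lemma sum_mset_le_sum_take_sorted:
  fixes xs :: "'a::ordered_comm_monoid_add list"
  assumes "sorted_wrt (\<ge>) xs" and "\<forall>x\<in>set xs. 0 \<le> x"
    and "M \<subseteq># mset xs" and "size M \<le> k"
  shows "sum_mset M \<le> sum_list (take k xs)"
  using assms
proof (induction xs arbitrary: M k)
  case Nil
  then show ?case by simp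
next
  case (Cons x xs)
  show ?case
  proof (cases "M = {#}")
    case True
    have "0 \<le> sum_list (take k (x # xs))"
      using Cons.prems(2) by (intro sum_list_nonneg) (metis in_set_takeD)
    then show ?thesis using True by simp
  next
    case False
    obtain y where y: "y \<in># M" "y \<le> x" and rest: "M - {#y#} \<subseteq># mset xs"
    proof (cases "x \<in># M")
      case True
      then show ?thesis
        using that[of x] Cons.prems(3) by (simp add: subset_eq_diff_conv)
    next
      case False
      obtain y where "y \<in># M" using \<open>M \<noteq> {#}\<close> by blast
      moreover have "M \<subseteq># mset xs"
        using Cons.prems(3) False by (simp add: inter_add_left1 subset_mset.inf.absorb_iff2)
      ultimately show ?thesis
        using that[of y] Cons.prems(1) mset_subset_eqD[of M "mset xs"]
        by (auto intro: subset_mset.order_trans[OF diff_subset_eq_self])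
    qed
    obtain k' where k: "k = Suc k'"
      using Cons.prems(4) y(1) by (cases k) (auto simp: size_eq_0_iff_empty)
    have "sum_mset (M - {#y#}) \<le> sum_list (take k' xs)"
      using Cons.prems y(1) rest k by (intro Cons.IH) (auto simp: size_Diff_singleton)
    then have "y + sum_mset (M - {#y#}) \<le> x + sum_list (take k' xs)"
      using y(2) by (rule add_mono[rotated])
    then show ?thesis using y(1) k by (simp add: sum_mset.remove[OF y(1)])
  qed
qed

lemma sum_take_greedy_count_le: "0 \<le> c \<Longrightarrow> sum_list (take (greedy_count c xs) xs) \<le> c"
  by (induction c xs rule: greedy_count.induct) auto

lemma sum_le_capacity_if_card_le_Nb:
  assumes "\<forall>i\<in>fam_jobs n f j. 0 \<le> v i" and "0 \<le> V"
    and "A \<subseteq> fam_jobs n f j" and "card A \<le> Nb n f v V j"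
  shows "sum v A \<le> V"
proof -
  let ?F = "fam_jobs n f j"
  let ?xs = "rev (sort (map v (sorted_list_of_set ?F)))"
  have "finite ?F" by (simp add: fam_jobs_def)
  have "mset (sorted_list_of_set ?F) = mset_set ?F"
    by (metis mset_sorted_list_of_multiset sorted_list_of_mset_set)
  then have "image_mset v (mset_set A) \<subseteq># mset ?xs"
    using assms(3) \<open>finite ?F\<close> finite_subset[OF assms(3)]
    by (auto intro: image_mset_subseteq_mono)
  moreover have "\<forall>x\<in>set ?xs. 0 \<le> x"
    using assms(1) \<open>finite ?F\<close> by auto
  ultimately have "sum_mset (image_mset v (mset_set A)) \<le> sum_list (take (Nb n f v V j) ?xs)"
    using assms(4) by (intro sum_mset_le_sum_take_sorted) (auto simp: sorted_wrt_rev)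
  also have "\<dots> \<le> V"
    unfolding Nb_def using assms(2) by (rule sum_take_greedy_count_le)
  finally show ?thesis by (simp add: sum_unfold_sum_mset)
qed

lemma Nb_pos:
  assumes "fam_jobs n f j \<noteq> {}" and "\<forall>i\<in>fam_jobs n f j. v i \<le> V"
  shows "0 < Nb n f v V j"
proof -
  let ?xs = "rev (sort (map v (sorted_list_of_set (fam_jobs n f j))))"
  have "finite (fam_jobs n f j)" by (simp add: fam_jobs_def)
  then have "length ?xs \<noteq> 0" and "\<forall>x\<in>set ?xs. x \<le> V"
    using assms by auto
  then show ?thesis unfolding Nb_def by (cases ?xs) auto
qed

lemma Bj_nonneg: "0 \<le> Bj n f v V j"
proof -
  have "0 \<le> real (card (fam_jobs n f j)) / real (Nb n f v V j)"
    by simp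
  then show ?thesis
    unfolding Bj_def zero_le_ceiling by linarith
qed

lemma fam_jobs_subset: "fam_jobs n f j \<subseteq> {1..n}"
  unfolding fam_jobs_def by blast

lemma card_le_ceiling_if_blocks_large:
  fixes A :: "'i \<Rightarrow> 'a set"
  assumes "finite I" and "b \<in> I" and "\<And>i. i \<in> I \<Longrightarrow> finite (A i)" and "A b \<noteq> {}"
    and "\<And>i i'. i \<in> I \<Longrightarrow> i' \<in> I \<Longrightarrow> i \<noteq> i' \<Longrightarrow> A i \<inter> A i' = {}"
    and "\<And>i. i \<in> I - {b} \<Longrightarrow> N \<le> card (A i)" and "0 < N"
  shows "int (card I) \<le> \<lceil>real (card (\<Union>i\<in>I. A i)) / real N\<rceil>"
proof -
  have "(card I - 1) * N = (\<Sum>i\<in>I - {b}. N)"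
    using assms(1,2) by simp
  also have "\<dots> \<le> (\<Sum>i\<in>I - {b}. card (A i))"
    using assms(6) by (rule sum_mono)
  also have "\<dots> < card (A b) + (\<Sum>i\<in>I - {b}. card (A i))"
    using assms(2-4) by (simp add: card_gt_0_iff)
  also have "\<dots> = card (\<Union>i\<in>I. A i)"
    using assms(1-3,5) by (simp add: card_UN_disjoint sum.remove)
  finally have "real (card I - 1) * real N < real (card (\<Union>i\<in>I. A i))"
    by (simp flip: of_nat_mult)
  then have "real (card I - 1) < real (card (\<Union>i\<in>I. A i)) / real N"
    using assms(7) by (simp add: pos_less_divide_eq)
  also have "\<dots> \<le> \<lceil>real (card (\<Union>i\<in>I. A i)) / real N\<rceil>"
    by (rule le_of_int_ceiling)
  finally have "real (card I - 1) < \<lceil>real (card (\<Union>i\<in>I. A i)) / real N\<rceil>" .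
  moreover have "0 < card I"
    using assms(1,2) by (auto simp: card_gt_0_iff)
  ultimately show ?thesis by linarith
qed

lemma pairwise_set_iff_nth:
  assumes "distinct xs"
  shows "pairwise R (set xs) \<longleftrightarrow> (\<forall>k<length xs. \<forall>l<length xs. k \<noteq> l \<longrightarrow> R (xs!k) (xs!l))"
proof
  assume "pairwise R (set xs)"
  then show "\<forall>k<length xs. \<forall>l<length xs. k \<noteq> l \<longrightarrow> R (xs!k) (xs!l)"
    using assms by (simp add: pairwiseD nth_eq_iff_index_eq)
next
  assume nth: "\<forall>k<length xs. \<forall>l<length xs. k \<noteq> l \<longrightarrow> R (xs!k) (xs!l)"
  show "pairwise R (set xs)"
  proof
    fix x y assume "x \<in> set xs" "y \<in> set xs" "x \<noteq> y"
    then show "R x y" using nth by (auto simp: in_set_conv_nth)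
  qed
qed

lemma ex_max_image_if_finite:
  fixes g :: "'a \<Rightarrow> 'b::linorder"
  assumes "finite A" and "A \<noteq> {}"
  shows "\<exists>x\<in>A. \<forall>y\<in>A. g y \<le> g x"
proof -
  have "Max (g ` A) \<in> g ` A"
    using assms by simp
  then obtain x where "x \<in> A" "g x = Max (g ` A)"
    by auto
  then show ?thesis
    using assms(1) by (auto intro!: bexI[of _ x] Max_ge)
qed

lemma ex_lex_min_if_finite:
  fixes g h :: "'a \<Rightarrow> 'b::linorder"
  assumes "finite C" and "C \<noteq> {}"
  obtains x where "x \<in> C" and "\<And>y. y \<in> C \<Longrightarrow> g x \<le> g y"
    and "\<And>y. y \<in> C \<Longrightarrow> g y \<le> g x \<Longrightarrow> h x \<le> h y"
proof -
  let ?M = "{x\<in>C. \<forall>y\<in>C. g x \<le> g y}"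
  have "arg_min_on g C \<in> ?M"
    using arg_min_if_finite(1)[OF assms] arg_min_least[OF assms] by auto
  then have M: "finite ?M" "?M \<noteq> {}"
    using assms(1) by auto
  show thesis
  proof (rule that)
    show "arg_min_on h ?M \<in> C" "\<And>y. y \<in> C \<Longrightarrow> g (arg_min_on h ?M) \<le> g y"
      using arg_min_if_finite(1)[OF M, of h] by auto
    fix y assume "y \<in> C" "g y \<le> g (arg_min_on h ?M)"
    then have "y \<in> ?M"
      using arg_min_if_finite(1)[OF M, of h] by (auto intro: order.trans)
    then show "h (arg_min_on h ?M) \<le> h y"
      by (rule arg_min_least[OF M])
  qed
qed

type_synonym batch = "nat set \<times> real"

locale batch_machine =
  fixes n :: nat and f :: "nat \<Rightarrow> nat" and q v :: "nat \<Rightarrow> real" and V :: real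
  assumes q_pos: "i \<in> {1..n} \<Longrightarrow> 0 < q (f i)"
    and v_nonneg: "i \<in> {1..n} \<Longrightarrow> 0 \<le> v i"
    and v_le_capacity: "i \<in> {1..n} \<Longrightarrow> v i \<le> V"
begin

definition valid_batch :: "batch \<Rightarrow> bool" where
  "valid_batch y \<longleftrightarrow> fst y \<noteq> {} \<and> fst y \<subseteq> {1..n} \<and> (\<forall>i\<in>fst y. \<forall>i'\<in>fst y. f i = f i')
     \<and> (\<Sum>i\<in>fst y. v i) \<le> V \<and> 0 \<le> snd y"

definition separated :: "batch \<Rightarrow> batch \<Rightarrow> bool" where
  "separated y z \<longleftrightarrow> fst y \<inter> fst z = {}
     \<and> (\<forall>i\<in>fst y. \<forall>i'\<in>fst z. snd y + q (f i) \<le> snd z \<or> snd z + q (f i') \<le> snd y)"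

definition feasible_batches :: "batch set \<Rightarrow> bool" where
  "feasible_batches B \<longleftrightarrow>
     (\<forall>y\<in>B. valid_batch y) \<and> (\<Union>y\<in>B. fst y) = {1..n} \<and> pairwise separated B"

definition batch_cost :: "(nat \<Rightarrow> real) \<Rightarrow> batch \<Rightarrow> real" where
  "batch_cost w y = (\<Sum>i\<in>fst y. w i * (snd y + q (f i)))"

definition total_cost :: "(nat \<Rightarrow> real) \<Rightarrow> batch set \<Rightarrow> real" where
  "total_cost w B = (\<Sum>y\<in>B. batch_cost w y)"

definition family_batches :: "batch set \<Rightarrow> nat \<Rightarrow> batch set" where
  "family_batches B j = {y\<in>B. \<exists>i\<in>fst y. f i = j}"

definition batch_time :: "nat set \<Rightarrow> real" where
  "batch_time A = q (f (Min A))"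

lemma feasible_iff_feasible_batches:
  "feasible n f q v V S \<longleftrightarrow> distinct S \<and> feasible_batches (set S)"
proof -
  have cover: "(\<Union>k<length S. fst (S!k)) = (\<Union>y\<in>set S. fst y)"
    by (metis image_image lessThan_atLeast0 list.set_map map_nth set_upt)
  have feasible_nth: "feasible n f q v V S \<longleftrightarrow> (\<forall>y\<in>set S. valid_batch y)
      \<and> (\<Union>y\<in>set S. fst y) = {1..n}
      \<and> (\<forall>k<length S. \<forall>l<length S. k \<noteq> l \<longrightarrow> separated (S!k) (S!l))"
    unfolding feasible_def valid_batch_def separated_def cover all_set_conv_all_nth ..
  have "distinct S" if valid: "\<forall>y\<in>set S. valid_batch y"
    and sep: "\<forall>k<length S. \<forall>l<length S. k \<noteq> l \<longrightarrow> separated (S!k) (S!l)"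
    unfolding distinct_conv_nth
  proof (intro allI impI)
    fix k l assume "k < length S" "l < length S" "k \<noteq> l"
    then have "fst (S!k) \<inter> fst (S!l) = {}" and "fst (S!k) \<noteq> {}"
      using valid sep by (auto simp: separated_def valid_batch_def)
    then show "S!k \<noteq> S!l" by auto
  qed
  then show ?thesis
    unfolding feasible_nth feasible_batches_def by (auto simp: pairwise_set_iff_nth)
qed

lemma cost_eq_total_cost: "distinct S \<Longrightarrow> cost w f q S = total_cost w (set S)"
  by (simp add: cost_def total_cost_def batch_cost_def sum_list_sum_nth atLeast0LessThan
      flip: sum_list_distinct_conv_sum_set)

lemma num_batches_eq_card:
  assumes "distinct S"
  shows "num_batches f S j = card (family_batches (set S) j)"
proof -
  have "num_batches f S j = length (filter (\<lambda>y. \<exists>i\<in>fst y. f i = j) S)"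
    unfolding num_batches_def by (simp add: length_filter_conv_card)
  also have "\<dots> = card (family_batches (set S) j)"
    unfolding family_batches_def using distinct_card[OF distinct_filter[OF assms]] by simp
  finally show ?thesis .
qed

lemma valid_batchD:
  assumes "valid_batch y"
  shows "fst y \<noteq> {}" and "fst y \<subseteq> {1..n}" and "i \<in> fst y \<Longrightarrow> i' \<in> fst y \<Longrightarrow> f i = f i'"
    and "(\<Sum>i\<in>fst y. v i) \<le> V" and "0 \<le> snd y"
  using assms unfolding valid_batch_def by blast+

lemma valid_batch_new_start: "valid_batch y \<Longrightarrow> 0 \<le> t \<Longrightarrow> valid_batch (fst y, t)"
  unfolding valid_batch_def fst_conv snd_conv by blast

lemma valid_batch_finite: "valid_batch y \<Longrightarrow> finite (fst y)"
  using valid_batchD(2) finite_subset[OF _ finite_atLeastAtMost] by blast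

lemma batch_time_eq:
  assumes "valid_batch y" and "i \<in> fst y"
  shows "batch_time (fst y) = q (f i)"
proof -
  have "Min (fst y) \<in> fst y"
    using Min_in valid_batch_finite[OF assms(1)] valid_batchD(1)[OF assms(1)] by blast
  then have "f (Min (fst y)) = f i"
    using valid_batchD(3)[OF assms(1)] assms(2) by blast
  then show ?thesis
    unfolding batch_time_def by simp
qed

lemma batch_time_pos:
  assumes "valid_batch y"
  shows "0 < batch_time (fst y)"
proof -
  obtain i where i: "i \<in> fst y" "i \<in> {1..n}"
    using valid_batchD(1,2)[OF assms] by blast
  then show ?thesis
    using batch_time_eq[OF assms i(1)] q_pos[OF i(2)] by simp
qed

lemma separated_iff:
  assumes "valid_batch y" and "valid_batch z"
  shows "separated y z \<longleftrightarrow> fst y \<inter> fst z = {} \<and>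
    (snd y + batch_time (fst y) \<le> snd z \<or> snd z + batch_time (fst z) \<le> snd y)"
proof -
  have "fst y \<noteq> {}" "fst z \<noteq> {}"
    using assms by (simp_all add: valid_batchD(1))
  moreover have "\<forall>i\<in>fst y. q (f i) = batch_time (fst y)" "\<forall>i\<in>fst z. q (f i) = batch_time (fst z)"
    using batch_time_eq[OF assms(1)] batch_time_eq[OF assms(2)] by simp_all
  ultimately show ?thesis
    unfolding separated_def by auto
qed

definition packed_start :: "batch set \<Rightarrow> batch \<Rightarrow> real" where
  "packed_start B y = (\<Sum>z\<in>{z\<in>B. snd z < snd y}. batch_time (fst z))"

definition packed :: "batch set \<Rightarrow> batch set" where
  "packed B = (\<lambda>y. (fst y, packed_start B y)) ` B"

(* Packed start times are sums of batch times over sets of job sets, so every packed schedule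
   is a subset of this finite set. *)
definition packing_grid :: "batch set" where
  "packing_grid = Pow {1..n} \<times> (\<lambda>C. \<Sum>A\<in>C. batch_time A) ` Pow (Pow {1..n})"

context
  fixes B assumes feasible: "feasible_batches B"
begin

lemma valid_batch_of_mem: "y \<in> B \<Longrightarrow> valid_batch y"
  using feasible unfolding feasible_batches_def by blast

lemma separated_of_mem:
  assumes "y \<in> B" "z \<in> B" "y \<noteq> z"
  shows "fst y \<inter> fst z = {}"
    and "snd y + batch_time (fst y) \<le> snd z \<or> snd z + batch_time (fst z) \<le> snd y"
proof -
  have "separated y z"
    using feasible assms unfolding feasible_batches_def by (blast dest: pairwiseD)
  then show "fst y \<inter> fst z = {}"
    and "snd y + batch_time (fst y) \<le> snd z \<or> snd z + batch_time (fst z) \<le> snd y"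
    using separated_iff valid_batch_of_mem assms(1,2) by blast+
qed

lemma inj_on_fst: "inj_on fst B"
proof
  fix y z assume yz: "y \<in> B" "z \<in> B" "fst y = fst z"
  show "y = z"
  proof (rule ccontr)
    assume "y \<noteq> z"
    then have "fst y \<inter> fst z = {}" using yz separated_of_mem by blast
    then show False using yz valid_batchD(1) valid_batch_of_mem by auto
  qed
qed

lemma inj_on_snd: "inj_on snd B"
proof
  fix y z assume yz: "y \<in> B" "z \<in> B" "snd y = snd z"
  show "y = z"
  proof (rule ccontr)
    assume "y \<noteq> z"
    then have "snd y + batch_time (fst y) \<le> snd z \<or> snd z + batch_time (fst z) \<le> snd y"
      using yz separated_of_mem by blast
    moreover have "0 < batch_time (fst y)" "0 < batch_time (fst z)"
      using yz batch_time_pos valid_batch_of_mem by blast+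
    ultimately show False using yz(3) by linarith
  qed
qed

lemma finite_batches: "finite B"
proof (rule finite_imageD[OF _ inj_on_fst])
  have "fst ` B \<subseteq> Pow {1..n}"
    using valid_batchD(2) valid_batch_of_mem by blast
  then show "finite (fst ` B)"
    by (rule finite_subset) simp
qed

lemma finish_le_start:
  assumes "y \<in> B" "z \<in> B" "snd y < snd z"
  shows "snd y + batch_time (fst y) \<le> snd z"
proof -
  have "snd y + batch_time (fst y) \<le> snd z \<or> snd z + batch_time (fst z) \<le> snd y"
    using assms separated_of_mem by (metis order.irrefl)
  moreover have "0 < batch_time (fst z)"
    using assms(2) batch_time_pos valid_batch_of_mem by blast
  ultimately show ?thesis using assms(3) by linarith
qed

lemma packed_start_le: "y \<in> B \<Longrightarrow> packed_start B y \<le> snd y"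
proof (induction "card {z\<in>B. snd z < snd y}" arbitrary: y rule: less_induct)
  case less
  let ?E = "{z\<in>B. snd z < snd y}"
  have fin: "finite ?E"
    using finite_batches by simp
  show ?case
  proof (cases "?E = {}")
    case True
    then show ?thesis
      using valid_batchD(5)[OF valid_batch_of_mem[OF less.prems]]
      unfolding packed_start_def True by simp
  next
    case False
    then obtain z where z: "z \<in> ?E" and z_last: "\<forall>z'\<in>?E. snd z' \<le> snd z"
      using ex_max_image_if_finite[OF fin] by blast
    have E_eq: "?E = insert z {z'\<in>B. snd z' < snd z}"
    proof -
      have "snd z' < snd z" if "z' \<in> ?E" "z' \<noteq> z" for z'
        using that z z_last inj_on_snd by (fastforce simp: inj_on_def order.order_iff_strict)
      then show ?thesis using z by auto
    qed
    have "card {z'\<in>B. snd z' < snd z} < card ?E"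
      using fin by (rule psubset_card_mono) (use E_eq in auto)
    then have IH: "packed_start B z \<le> snd z"
      using less.hyps z by blast
    have "packed_start B y = batch_time (fst z) + packed_start B z"
      unfolding packed_start_def by (subst E_eq) (use fin E_eq in simp)
    also have "\<dots> \<le> snd z + batch_time (fst z)"
      using IH by simp
    also have "\<dots> \<le> snd y"
      using z finish_le_start[OF _ less.prems] by simp
    finally show ?thesis .
  qed
qed

lemma packed_start_step:
  assumes "y \<in> B" "z \<in> B" "snd y < snd z"
  shows "packed_start B y + batch_time (fst y) \<le> packed_start B z"
proof -
  have fin: "finite {w\<in>B. snd w < snd y}" "finite {w\<in>B. snd w < snd z}"
    using finite_batches by simp_all
  have sub: "insert y {w\<in>B. snd w < snd y} \<subseteq> {w\<in>B. snd w < snd z}"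
    using assms by auto
  have "packed_start B y + batch_time (fst y) = (\<Sum>w\<in>insert y {w\<in>B. snd w < snd y}. batch_time (fst w))"
    unfolding packed_start_def using fin(1) by (subst sum.insert) auto
  also have "\<dots> \<le> packed_start B z"
    unfolding packed_start_def using fin(2) sub
    by (intro sum_mono2) (auto intro: less_imp_le batch_time_pos valid_batch_of_mem)
  finally show ?thesis .
qed

lemma packed_start_nonneg: "0 \<le> packed_start B y"
  unfolding packed_start_def
  by (intro sum_nonneg less_imp_le batch_time_pos) (auto intro: valid_batch_of_mem)

lemma inj_on_packed: "inj_on (\<lambda>y. (fst y, packed_start B y)) B"
  using inj_on_fst by (auto simp: inj_on_def)

lemma feasible_packed: "feasible_batches (packed B)"
  unfolding feasible_batches_def
proof (intro conjI)
  show "\<forall>y'\<in>packed B. valid_batch y'"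
    using valid_batch_of_mem packed_start_nonneg
    by (auto simp: packed_def intro: valid_batch_new_start)
  show "(\<Union>y'\<in>packed B. fst y') = {1..n}"
    using feasible by (simp add: packed_def feasible_batches_def image_image)
  show "pairwise separated (packed B)"
    unfolding packed_def
  proof (rule pairwise_imageI)
    fix y z assume yz: "y \<in> B" "z \<in> B" "y \<noteq> z"
    have valid: "valid_batch (fst y, packed_start B y)" "valid_batch (fst z, packed_start B z)"
      using yz valid_batch_new_start[OF valid_batch_of_mem packed_start_nonneg]
      by blast+
    have "snd y \<noteq> snd z"
      using yz inj_on_snd by (auto simp: inj_on_def)
    then have "packed_start B y + batch_time (fst y) \<le> packed_start B z
        \<or> packed_start B z + batch_time (fst z) \<le> packed_start B y"
      using yz packed_start_step by (meson linorder_neqE)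
    then show "separated (fst y, packed_start B y) (fst z, packed_start B z)"
      using separated_of_mem[OF yz] by (simp add: separated_iff[OF valid])
  qed
qed

lemma total_cost_packed_le:
  assumes "\<forall>i\<in>{1..n}. 0 \<le> w i"
  shows "total_cost w (packed B) \<le> total_cost w B"
proof -
  have "total_cost w (packed B) = (\<Sum>y\<in>B. batch_cost w (fst y, packed_start B y))"
    unfolding total_cost_def packed_def by (simp add: sum.reindex[OF inj_on_packed])
  also have "\<dots> \<le> total_cost w B"
    unfolding total_cost_def
  proof (rule sum_mono)
    fix y assume y: "y \<in> B"
    have "w i * (packed_start B y + q (f i)) \<le> w i * (snd y + q (f i))" if "i \<in> fst y" for i
    proof -
      have "i \<in> {1..n}"
        using that valid_batchD(2)[OF valid_batch_of_mem[OF y]] by auto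
      then show ?thesis
        using assms packed_start_le[OF y] by (simp add: mult_left_mono)
    qed
    then show "batch_cost w (fst y, packed_start B y) \<le> batch_cost w y"
      unfolding batch_cost_def by (simp add: sum_mono)
  qed
  finally show ?thesis .
qed

lemma packed_subset_grid: "packed B \<subseteq> packing_grid"
proof
  fix y' assume "y' \<in> packed B"
  then obtain y where y: "y \<in> B" "y' = (fst y, packed_start B y)"
    unfolding packed_def by blast
  let ?C = "fst ` {z\<in>B. snd z < snd y}"
  have "packed_start B y = (\<Sum>A\<in>?C. batch_time A)"
    unfolding packed_start_def
    by (rule sum.reindex[symmetric, unfolded comp_def]) (rule inj_on_subset[OF inj_on_fst], auto)
  moreover have "?C \<subseteq> Pow {1..n}" "fst y \<subseteq> {1..n}"
    using y(1) valid_batchD(2) valid_batch_of_mem by blast+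
  ultimately show "y' \<in> packing_grid"
    unfolding packing_grid_def using y(2) by blast
qed

end

lemma finite_packing_grid: "finite packing_grid"
  unfolding packing_grid_def by simp

lemma exists_feasible_batches: "\<exists>B. feasible_batches B"
proof -
  define Q where "Q = (\<Sum>i\<in>{1..n}. q (f i))"
  have q_le: "q (f i) \<le> Q" if "i \<in> {1..n}" for i
    unfolding Q_def using that q_pos by (intro member_le_sum) (auto intro: less_imp_le)
  have "0 \<le> Q"
    unfolding Q_def using q_pos by (intro sum_nonneg) (auto intro: less_imp_le)
  have "feasible_batches ((\<lambda>i. ({i}, real i * Q)) ` {1..n})"
    unfolding feasible_batches_def
  proof (intro conjI)
    show "\<forall>y\<in>(\<lambda>i. ({i}, real i * Q)) ` {1..n}. valid_batch y"
      using v_le_capacity \<open>0 \<le> Q\<close> by (auto simp: valid_batch_def)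
    show "(\<Union>y\<in>(\<lambda>i. ({i}, real i * Q)) ` {1..n}. fst y) = {1..n}"
      by auto
    show "pairwise separated ((\<lambda>i. ({i}, real i * Q)) ` {1..n})"
    proof (rule pairwise_imageI)
      fix i i' assume i: "i \<in> {1..n}" "i' \<in> {1..n}" "i \<noteq> i'"
      have "real k * Q + q (f k) \<le> real k' * Q" if "k \<in> {1..n}" "k < k'" for k k'
      proof -
        have "real k * Q + q (f k) \<le> real (Suc k) * Q"
          using q_le[OF that(1)] by (simp add: algebra_simps)
        also have "\<dots> \<le> real k' * Q"
          using that(2) \<open>0 \<le> Q\<close> by (intro mult_right_mono) simp_all
        finally show ?thesis .
      qed
      then show "separated ({i}, real i * Q) ({i'}, real i' * Q)"
        using i by (auto simp: separated_def nat_neq_iff)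
    qed
  qed
  then show ?thesis ..
qed

lemma exists_lex_optimal:
  assumes w: "\<forall>i\<in>{1..n}. 0 \<le> w i"
  obtains B where "feasible_batches B"
    and "\<And>B'. feasible_batches B' \<Longrightarrow> total_cost w B \<le> total_cost w B'"
    and "\<And>B'. feasible_batches B' \<Longrightarrow> total_cost w B' \<le> total_cost w B \<Longrightarrow>
           total_cost (\<lambda>_. 1) B \<le> total_cost (\<lambda>_. 1) B'"
proof -
  let ?C = "{B. feasible_batches B \<and> B \<subseteq> packing_grid}"
  have packed_in: "packed B \<in> ?C" if "feasible_batches B" for B
    using feasible_packed[OF that] packed_subset_grid[OF that] by blast
  have "finite ?C"
    using finite_packing_grid by (auto intro: finite_subset[of _ "Pow packing_grid"])
  moreover have "?C \<noteq> {}"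
    using exists_feasible_batches packed_in by blast
  ultimately obtain B where B: "B \<in> ?C"
    and min_w: "\<And>B'. B' \<in> ?C \<Longrightarrow> total_cost w B \<le> total_cost w B'"
    and min_1: "\<And>B'. B' \<in> ?C \<Longrightarrow> total_cost w B' \<le> total_cost w B \<Longrightarrow>
                   total_cost (\<lambda>_. 1) B \<le> total_cost (\<lambda>_. 1) B'"
    by (rule ex_lex_min_if_finite[where g = "total_cost w" and h = "total_cost (\<lambda>_. 1)"]) blast
  show thesis
  proof (rule that)
    show "feasible_batches B"
      using B by blast
  next
    fix B' assume B': "feasible_batches B'"
    have "total_cost w B \<le> total_cost w (packed B')"
      using min_w packed_in[OF B'] .
    also have "\<dots> \<le> total_cost w B'"
      using total_cost_packed_le[OF B' w] .
    finally show "total_cost w B \<le> total_cost w B'" .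
  next
    fix B' assume B': "feasible_batches B'" and "total_cost w B' \<le> total_cost w B"
    then have "total_cost w (packed B') \<le> total_cost w B"
      using total_cost_packed_le[OF B' w] by linarith
    then have "total_cost (\<lambda>_. 1) B \<le> total_cost (\<lambda>_. 1) (packed B')"
      using min_1 packed_in[OF B'] by blast
    also have "\<dots> \<le> total_cost (\<lambda>_. 1) B'"
      using total_cost_packed_le[OF B'] by simp
    finally show "total_cost (\<lambda>_. 1) B \<le> total_cost (\<lambda>_. 1) B'" .
  qed
qed

(* Deleting x from every batch other than a only affects the batch that contains x. *)
definition reassign :: "nat \<Rightarrow> batch \<Rightarrow> batch \<Rightarrow> batch" where
  "reassign x a y = (if y = a then insert x (fst y) else fst y - {x}, snd y)"

definition move_job :: "nat \<Rightarrow> batch \<Rightarrow> batch set \<Rightarrow> batch set" where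
  "move_job x a B = {y' \<in> reassign x a ` B. fst y' \<noteq> {}}"

lemma fst_reassign_subset: "fst (reassign x a y) \<subseteq> insert x (fst y)"
  unfolding reassign_def by auto

lemma x_in_reassign_iff: "x \<in> fst (reassign x a y) \<longleftrightarrow> y = a"
  unfolding reassign_def by simp

context
  fixes B a b x
  assumes feasible: "feasible_batches B" and a: "a \<in> B" and b: "b \<in> B" "a \<noteq> b"
    and x: "x \<in> fst b"
begin

lemma x_only_in_b: "y \<in> B \<Longrightarrow> x \<in> fst y \<Longrightarrow> y = b"
  using separated_of_mem(1)[OF feasible _ b(1)] x by blast

lemma inj_on_reassign: "inj_on (reassign x a) B"
  using inj_on_snd[OF feasible] by (auto simp: inj_on_def reassign_def)

context
  assumes same_family: "\<exists>i\<in>fst a. f i = f x"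
    and fits: "(\<Sum>i\<in>insert x (fst a). v i) \<le> V"
begin

lemma reassign_family:
  assumes "y \<in> B" and "i \<in> fst (reassign x a y)"
  shows "\<exists>i0\<in>fst y. f i0 = f i"
proof (cases "i = x \<and> y = a")
  case True
  then show ?thesis using same_family by blast
next
  case False
  then have "i \<in> fst y"
    using assms(2) by (auto simp: reassign_def split: if_splits)
  then show ?thesis by blast
qed

lemma valid_reassign:
  assumes y: "y \<in> B" and ne: "fst (reassign x a y) \<noteq> {}"
  shows "valid_batch (reassign x a y)"
proof -
  have valid_y: "valid_batch y"
    using valid_batch_of_mem[OF feasible y] .
  have x_job: "x \<in> {1..n}"
    using x valid_batchD(2)[OF valid_batch_of_mem[OF feasible b(1)]] by blast
  have jobs: "fst (reassign x a y) \<subseteq> {1..n}"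
    using fst_reassign_subset valid_batchD(2)[OF valid_y] x_job by blast
  have same: "f i = f i'" if "i \<in> fst (reassign x a y)" "i' \<in> fst (reassign x a y)" for i i'
    using reassign_family[OF y that(1)] reassign_family[OF y that(2)] valid_batchD(3)[OF valid_y]
    by metis
  have "(\<Sum>i\<in>fst (reassign x a y). v i) \<le> V"
  proof (cases "y = a")
    case True
    then show ?thesis using fits by (simp add: reassign_def)
  next
    case False
    then have "(\<Sum>i\<in>fst (reassign x a y). v i) \<le> (\<Sum>i\<in>fst y. v i)"
      using valid_batch_finite[OF valid_y] valid_batchD(2)[OF valid_y] v_nonneg
      by (intro sum_mono2) (auto simp: reassign_def)
    then show ?thesis
      using valid_batchD(4)[OF valid_y] by linarith
  qed
  moreover have "0 \<le> snd (reassign x a y)"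
    using valid_batchD(5)[OF valid_y] by (simp add: reassign_def)
  ultimately show ?thesis
    using ne jobs same unfolding valid_batch_def by blast
qed

lemma batch_time_reassign:
  assumes y: "y \<in> B" and ne: "fst (reassign x a y) \<noteq> {}"
  shows "batch_time (fst (reassign x a y)) = batch_time (fst y)"
proof -
  obtain i where i: "i \<in> fst (reassign x a y)"
    using ne by blast
  then obtain i0 where "i0 \<in> fst y" "f i0 = f i"
    using reassign_family[OF y] by blast
  then show ?thesis
    using batch_time_eq[OF valid_reassign[OF y ne] i] batch_time_eq[OF valid_batch_of_mem[OF feasible y]]
    by simp
qed

lemma feasible_move_job: "feasible_batches (move_job x a B)"
  unfolding feasible_batches_def
proof (intro conjI)
  show "\<forall>y'\<in>move_job x a B. valid_batch y'"
    using valid_reassign unfolding move_job_def by blast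
  have "i \<in> (\<Union>y'\<in>move_job x a B. fst y')" if i: "i \<in> {1..n}" for i
  proof (cases "i = x")
    case True
    then show ?thesis
      using a x_in_reassign_iff unfolding move_job_def by blast
  next
    case False
    obtain y where "y \<in> B" "i \<in> fst y"
      using feasible i unfolding feasible_batches_def by blast
    then have "y \<in> B" "i \<in> fst (reassign x a y)"
      using False by (auto simp: reassign_def)
    then show ?thesis
      unfolding move_job_def by blast
  qed
  moreover have "fst y' \<subseteq> {1..n}" if "y' \<in> move_job x a B" for y'
    using that valid_reassign valid_batchD(2) unfolding move_job_def by blast
  ultimately show "(\<Union>y'\<in>move_job x a B. fst y') = {1..n}"
    by blast
  show "pairwise separated (move_job x a B)"
  proof
    fix y' z' assume "y' \<in> move_job x a B" "z' \<in> move_job x a B" "y' \<noteq> z'"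
    then obtain y z where yz: "y \<in> B" "z \<in> B" "y \<noteq> z"
      and y': "y' = reassign x a y" "fst y' \<noteq> {}" and z': "z' = reassign x a z" "fst z' \<noteq> {}"
      unfolding move_job_def by blast
    have "fst y' \<inter> fst z' = {}"
    proof -
      have "x \<notin> fst y' \<inter> fst z'"
        using x_in_reassign_iff[of x a y] x_in_reassign_iff[of x a z] y'(1) z'(1) yz(3) by auto
      moreover have "fst y' \<inter> fst z' \<subseteq> insert x (fst y \<inter> fst z)"
        using fst_reassign_subset y'(1) z'(1) by blast
      ultimately show ?thesis
        using separated_of_mem(1)[OF feasible yz] by blast
    qed
    moreover have "snd y' + batch_time (fst y') \<le> snd z' \<or> snd z' + batch_time (fst z') \<le> snd y'"
      using separated_of_mem(2)[OF feasible yz] y' z'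
        batch_time_reassign[OF yz(1)] batch_time_reassign[OF yz(2)]
      by (simp add: reassign_def)
    ultimately show "separated y' z'"
      using separated_iff valid_reassign yz(1,2) y' z' by blast
  qed
qed

end

lemma total_cost_move_job: "total_cost w (move_job x a B) = total_cost w B + w x * (snd a - snd b)"
proof -
  let ?c = "\<lambda>y. w x * (snd y + q (f x))"
  have fin: "finite B"
    using finite_batches[OF feasible] .
  have xa: "x \<notin> fst a"
    using x_only_in_b[OF a] b(2) by blast
  have fin_fst: "finite (fst y)" if "y \<in> B" for y
    using valid_batch_finite[OF valid_batch_of_mem[OF feasible that]] .
  have cost_reassign: "batch_cost w (reassign x a y)
      = batch_cost w y + (if y = a then ?c a else 0) - (if y = b then ?c b else 0)" if "y \<in> B" for y
  proof -
    consider "y = a" | "y = b" | "y \<noteq> a" "y \<noteq> b" by blast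
    then show ?thesis
    proof cases
      case 1
      then show ?thesis
        using xa fin_fst[OF that] b(2) by (simp add: batch_cost_def reassign_def)
    next
      case 2
      then show ?thesis
        using x fin_fst[OF that] b(2) by (simp add: batch_cost_def reassign_def sum_diff1)
    next
      case 3
      then have "x \<notin> fst y"
        using x_only_in_b[OF that] by blast
      then show ?thesis
        using 3 by (simp add: batch_cost_def reassign_def)
    qed
  qed
  have "total_cost w (move_job x a B) = (\<Sum>y'\<in>reassign x a ` B. batch_cost w y')"
    unfolding total_cost_def move_job_def
    by (rule sum.mono_neutral_left) (auto simp: fin batch_cost_def)
  also have "\<dots> = (\<Sum>y\<in>B. batch_cost w (reassign x a y))"
    by (simp add: sum.reindex[OF inj_on_reassign])
  also have "\<dots> = total_cost w B + ?c a - ?c b"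
    using a b fin by (simp add: cost_reassign sum.distrib sum_subtractf total_cost_def)
  also have "\<dots> = total_cost w B + w x * (snd a - snd b)"
    by (simp add: algebra_simps)
  finally show ?thesis .
qed

end

lemma family_batches_cover:
  assumes feasible: "feasible_batches B"
  shows "(\<Union>y\<in>family_batches B j. fst y) = fam_jobs n f j"
proof
  show "(\<Union>y\<in>family_batches B j. fst y) \<subseteq> fam_jobs n f j"
  proof
    fix i assume "i \<in> (\<Union>y\<in>family_batches B j. fst y)"
    then obtain y i0 where y: "y \<in> B" "i \<in> fst y" "i0 \<in> fst y" "f i0 = j"
      unfolding family_batches_def by blast
    then have "f i = j"
      using valid_batchD(3)[OF valid_batch_of_mem[OF feasible y(1)] y(2) y(3)] by simp
    then show "i \<in> fam_jobs n f j"
      using valid_batchD(2)[OF valid_batch_of_mem[OF feasible y(1)]] y(2)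
      unfolding fam_jobs_def by blast
  qed
  have "(\<Union>y\<in>B. fst y) = {1..n}"
    using feasible unfolding feasible_batches_def by blast
  then show "fam_jobs n f j \<subseteq> (\<Union>y\<in>family_batches B j. fst y)"
    unfolding fam_jobs_def family_batches_def by blast
qed

lemma ex_underfull_family_batch:
  assumes feasible: "feasible_batches B"
    and many: "Bj n f v V j < int (card (family_batches B j))"
    and b: "b \<in> family_batches B j"
  shows "\<exists>a\<in>family_batches B j - {b}. card (fst a) < Nb n f v V j"
proof (rule ccontr)
  assume "\<not> ?thesis"
  then have large: "\<And>a. a \<in> family_batches B j - {b} \<Longrightarrow> Nb n f v V j \<le> card (fst a)"
    by (auto simp: not_less)
  have X_sub: "family_batches B j \<subseteq> B"
    unfolding family_batches_def by blast
  have "fst b \<noteq> {}"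
    using valid_batchD(1) valid_batch_of_mem[OF feasible] b X_sub by blast
  then have "fam_jobs n f j \<noteq> {}"
    using b family_batches_cover[OF feasible] by blast
  then have "0 < Nb n f v V j"
    using v_le_capacity fam_jobs_subset by (intro Nb_pos) blast+
  moreover have "finite (family_batches B j)"
    using finite_subset[OF X_sub finite_batches[OF feasible]] .
  moreover have "finite (fst y)" if "y \<in> family_batches B j" for y
    using valid_batch_finite valid_batch_of_mem[OF feasible] that X_sub by blast
  moreover have "fst y \<inter> fst z = {}"
    if "y \<in> family_batches B j" "z \<in> family_batches B j" "y \<noteq> z" for y z
    using separated_of_mem(1)[OF feasible] that X_sub by blast
  ultimately have "int (card (family_batches B j)) \<le> Bj n f v V j"
    unfolding Bj_def family_batches_cover[OF feasible, symmetric]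
    using card_le_ceiling_if_blocks_large[where A = fst, OF _ b _ \<open>fst b \<noteq> {}\<close> _ large]
    by blast
  then show False
    using many by simp
qed

lemma insert_fits_if_underfull:
  assumes feasible: "feasible_batches B" and a: "a \<in> family_batches B j"
    and underfull: "card (fst a) < Nb n f v V j" and x: "x \<in> fam_jobs n f j"
  shows "(\<Sum>i\<in>insert x (fst a). v i) \<le> V"
proof (rule sum_le_capacity_if_card_le_Nb)
  show "\<forall>i\<in>fam_jobs n f j. 0 \<le> v i"
    using v_nonneg fam_jobs_subset by blast
  have "x \<in> {1..n}"
    using x fam_jobs_subset by blast
  then show "0 \<le> V"
    using v_nonneg v_le_capacity order.trans by blast
  show "insert x (fst a) \<subseteq> fam_jobs n f j"
    using x a family_batches_cover[OF feasible] by blast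
  show "card (insert x (fst a)) \<le> Nb n f v V j"
    using underfull by (intro card_insert_le_m1) auto
qed

lemma improving_move_exists:
  assumes feasible: "feasible_batches B"
    and many: "Bj n f v V j < int (card (family_batches B j))"
  obtains B' where "feasible_batches B'"
    and "\<And>w. \<forall>i\<in>{1..n}. 0 \<le> w i \<Longrightarrow> total_cost w B' \<le> total_cost w B"
    and "total_cost (\<lambda>_. 1) B' < total_cost (\<lambda>_. 1) B"
proof -
  let ?X = "family_batches B j"
  have X_sub: "?X \<subseteq> B"
    unfolding family_batches_def by blast
  have "?X \<noteq> {}"
    using many Bj_nonneg[of n f v V j] by auto
  then obtain b where b: "b \<in> ?X" and b_last: "\<forall>y\<in>?X. snd y \<le> snd b"
    using ex_max_image_if_finite finite_subset[OF X_sub finite_batches[OF feasible]] by blast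
  obtain a where a: "a \<in> ?X" "a \<noteq> b" and a_underfull: "card (fst a) < Nb n f v V j"
    using ex_underfull_family_batch[OF feasible many b] by blast
  obtain x where x: "x \<in> fst b"
    using valid_batchD(1) valid_batch_of_mem[OF feasible] b X_sub by blast
  have "snd a \<noteq> snd b"
    using inj_on_snd[OF feasible] a b X_sub by (auto simp: inj_on_def)
  then have earlier: "snd a < snd b"
    using b_last a(1) by force
  have x_fam: "x \<in> fam_jobs n f j"
    using x b family_batches_cover[OF feasible] by blast
  have same_family: "\<exists>i\<in>fst a. f i = f x"
    using a(1) x_fam unfolding family_batches_def fam_jobs_def by auto
  have fits: "(\<Sum>i\<in>insert x (fst a). v i) \<le> V"
    using insert_fits_if_underfull[OF feasible a(1) a_underfull x_fam] .
  note move = feasible a(1)[THEN subsetD[OF X_sub]] b[THEN subsetD[OF X_sub]] a(2) x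
  show thesis
  proof (rule that)
    show "feasible_batches (move_job x a B)"
      using feasible_move_job[OF move same_family fits] .
    fix w :: "nat \<Rightarrow> real" assume "\<forall>i\<in>{1..n}. 0 \<le> w i"
    then have "0 \<le> w x"
      using x_fam fam_jobs_subset by blast
    then show "total_cost w (move_job x a B) \<le> total_cost w B"
      using total_cost_move_job[OF move] earlier by (simp add: mult_nonneg_nonpos)
  next
    show "total_cost (\<lambda>_. 1) (move_job x a B) < total_cost (\<lambda>_. 1) B"
      using total_cost_move_job[OF move] earlier by simp
  qed
qed

lemma lex_optimal_family_bound:
  assumes feasible: "feasible_batches B" and w: "\<forall>i\<in>{1..n}. 0 \<le> w i"
    and lex: "\<And>B'. feasible_batches B' \<Longrightarrow> total_cost w B' \<le> total_cost w B \<Longrightarrow>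
                total_cost (\<lambda>_. 1) B \<le> total_cost (\<lambda>_. 1) B'"
  shows "int (card (family_batches B j)) \<le> Bj n f v V j"
proof (rule ccontr)
  assume "\<not> ?thesis"
  then obtain B' where B': "feasible_batches B'"
    "\<And>w. \<forall>i\<in>{1..n}. 0 \<le> w i \<Longrightarrow> total_cost w B' \<le> total_cost w B"
    "total_cost (\<lambda>_. 1) B' < total_cost (\<lambda>_. 1) B"
    using improving_move_exists[OF feasible] by (metis not_le)
  then show False
    using lex[OF B'(1) B'(2)[OF w]] by simp
qed

end

theorem mainTheorem1:
  fixes n m :: nat and f :: "nat \<Rightarrow> nat" and q :: "nat \<Rightarrow> real"
    and v w :: "nat \<Rightarrow> real" and V :: real
  assumes fam: "\<forall>i\<in>{1..n}. f i \<in> {1..m}"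
    and q_pos: "\<forall>j\<in>{1..m}. q j > 0"
    and w_nonneg: "\<forall>i\<in>{1..n}. w i \<ge> 0"
    and v_bounds: "\<forall>i\<in>{1..n}. 0 \<le> v i \<and> v i \<le> V"
  shows "\<exists>S. optimal n f q v w V S \<and>
           (\<forall>j\<in>{1..m}. int (num_batches f S j) \<le> Bj n f v V j)"
proof -
  interpret batch_machine n f q v V
    using fam q_pos v_bounds by unfold_locales auto
  obtain B where B: "feasible_batches B"
    and opt: "\<And>B'. feasible_batches B' \<Longrightarrow> total_cost w B \<le> total_cost w B'"
    and lex: "\<And>B'. feasible_batches B' \<Longrightarrow> total_cost w B' \<le> total_cost w B \<Longrightarrow>
                total_cost (\<lambda>_. 1) B \<le> total_cost (\<lambda>_. 1) B'"
    using exists_lex_optimal[OF w_nonneg] by blast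
  obtain S where S: "set S = B" "distinct S"
    using finite_distinct_list[OF finite_batches[OF B]] by blast
  have "optimal n f q v w V S"
    unfolding optimal_def
  proof (intro conjI allI impI)
    show "feasible n f q v V S"
      using B S by (simp add: feasible_iff_feasible_batches)
    fix S' assume "feasible n f q v V S'"
    then show "cost w f q S \<le> cost w f q S'"
      using opt S by (simp add: feasible_iff_feasible_batches cost_eq_total_cost)
  qed
  moreover have "int (num_batches f S j) \<le> Bj n f v V j" for j
    using lex_optimal_family_bound[OF B w_nonneg lex] num_batches_eq_card[OF S(2)] S(1) by simp
  ultimately show ?thesis by blast
qed

end
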